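(* Let $\alpha>0$, $\beta>0$, $K\ge1$, $A\ge1$, $\eta>0$, $s\in(0,1)$ and $\delta\in(0,1)$. Let $(\nu_\omega)_{\omega\in\Omega}$ be a $(\delta,\alpha,K)$-Furstenberg tuple such that $\Omega$ satisfies the Frostman condition \[ |\Omega\cap B_r|\le A\,r^\beta|\Omega|\quad\text{for every ball }B_r\subset\mathbb{R}^2\text{ of radius } r\in[\delta,1]. \] Write $E_\omega=\operatorname{supp}(\nu_\omega)$, $E=\bigcup_{\omega\in\Omega}E_\omega$, and assume $\mathcal{N}_{\delta^s}(E)\le(\delta^s)^{-\alpha-\beta/2-\eta}$. Let $\Lambda$ be a maximal $\delta^s$-separated subset of $\Omega$ and for $\lambda\in\Lambda$ put $\Omega_\lambda=\Omega\cap B^2(\lambda,\delta^s)$. Then there is a set $\Lambda'\subset\Lambda$ such that \[ |\Lambda'|\ \ge\ c\,(\delta^s)^{-\beta} \qquad\text{and}\qquad |\Omega_\lambda|\ \ge\ c\,(\delta^s)^{\beta+2\eta}|\Omega|\ \text{ for all }\lambda\in\Lambda', \] where $c>0$ depends only on $K,\alpha,\beta$ and $A$.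
   Context: $B^d(x,r)$ denotes the open ball of centre $x$ and radius $r$ in $\mathbb{R}^d$, $B^d=B^d(0,1)$, and $B_r$ an arbitrary ball of radius $r$. A probability measure $\mu$ on $B^1=(-1,1)$ is a $(\delta,\alpha,K)$-measure if $\mu(B_r)\le Kr^\alpha$ for every ball $B_r$ of radius $r\in[\delta,1]$. For $\omega=(a,b)\in\mathbb{R}^2$, $L_\omega(t)=at+b$, and $L_\omega$ also denotes the line $\{(t,y):y=at+b\}$. A family $(\nu_\omega)_{\omega\in\Omega}$ is a $(\delta,\alpha,K)$-Furstenberg tuple if $\Omega\subset B^2$ is a $\delta$-separated set and, for each $\omega\in\Omega$, there is a $(\delta,\alpha,K)$-measure $\nu'_\omega$ with $\nu_\omega$ equal to the push-forward of $\nu'_\omega$ under the map $x\mapsto(x,L_\omega(x))$. $\mathcal{N}_r(A)$ denotes the smallest number of balls of radius $r$ needed to cover $A$; $|\cdot|$ denotes cardinality. *)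

theory Defs
  imports "HOL-Probability.Probability"
begin

definition line_map :: "real \<times> real \<Rightarrow> real \<Rightarrow> real" where
  "line_map \<omega> t = fst \<omega> * t + snd \<omega>"

definition separated :: "real \<Rightarrow> ('a::metric_space) set \<Rightarrow> bool" where
  "separated d S \<longleftrightarrow> (\<forall>x\<in>S. \<forall>y\<in>S. x \<noteq> y \<longrightarrow> d \<le> dist x y)"

definition maximal_separated_subset :: "real \<Rightarrow> ('a::metric_space) set \<Rightarrow> 'a set \<Rightarrow> bool" where
  "maximal_separated_subset d L S \<longleftrightarrow>
     L \<subseteq> S \<and> separated d L \<and> (\<forall>L'. L \<subseteq> L' \<and> L' \<subseteq> S \<and> separated d L' \<longrightarrow> L' = L)"

text \<open>(delta,alpha,K)-measure: a probability measure on (-1,1) (Borel measure on the real line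
  giving full mass to (-1,1)) with the non-concentration bound for radii in [delta,1].\<close>
definition dak_measure :: "real \<Rightarrow> real \<Rightarrow> real \<Rightarrow> real measure \<Rightarrow> bool" where
  "dak_measure \<delta> \<alpha> K \<mu> \<longleftrightarrow>
     prob_space \<mu> \<and> sets \<mu> = sets borel \<and> measure \<mu> {-1<..<1} = 1 \<and>
     (\<forall>x r. \<delta> \<le> r \<and> r \<le> 1 \<longrightarrow> measure \<mu> (ball x r) \<le> K * r powr \<alpha>)"

definition furstenberg_tuple ::
  "real \<Rightarrow> real \<Rightarrow> real \<Rightarrow> (real \<times> real) set \<Rightarrow> (real \<times> real \<Rightarrow> (real \<times> real) measure) \<Rightarrow> bool" where
  "furstenberg_tuple \<delta> \<alpha> K \<Omega> \<nu> \<longleftrightarrow>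
     \<Omega> \<subseteq> ball 0 1 \<and> separated \<delta> \<Omega> \<and>
     (\<forall>\<omega>\<in>\<Omega>. \<exists>\<nu>'. dak_measure \<delta> \<alpha> K \<nu>' \<and>
                 \<nu> \<omega> = distr \<nu>' borel (\<lambda>x. (x, line_map \<omega> x)))"

definition support :: "('a::metric_space) measure \<Rightarrow> 'a set" where
  "support M = {x. \<forall>e>0. 0 < emeasure M (ball x e)}"

definition covering_number :: "real \<Rightarrow> ('a::metric_space) set \<Rightarrow> nat" where
  "covering_number r A = Inf {card C | C. finite C \<and> A \<subseteq> (\<Union>c\<in>C. ball c r)}"

end

theory Submission
  imports Defs
begin

text \<open>
  Put \<rho> = \<delta>^s and cover E by N \<le> \<rho>^(-\<alpha>-\<beta>/2-\<eta>) balls of radius \<rho>. A line measure gives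
  mass at most K\<rho>^\<alpha> to each ball and at most 1/2 to every interval of a fixed length c0, so
  expanding (\<Sum>k. w k)^2 = 1 over the balls shows that every line meets at least (K\<rho>^\<alpha>)^(-2)/2
  ordered pairs of balls whose centres are c0/2 apart horizontally. Two such balls pin a line
  down to O(\<rho>), so only O(1) lines of a \<rho>-separated family meet both; double counting gives
  |\<Lambda>| \<lesssim> \<rho>^(2\<alpha>) N^2 \<le> \<rho>^(-\<beta>-2\<eta>). Finally the balls B(\<lambda>, \<rho>), \<lambda> \<in> \<Lambda>, cover \<Omega>: those with
  fewer than c\<rho>^(\<beta>+2\<eta>)|\<Omega>| points carry at most half of \<Omega>, and by the Frostman bound each
  of the others carries at most A\<rho>^\<beta>|\<Omega>| points, so at least \<rho>^(-\<beta>)/(2A) of them are heavy.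
\<close>

lemma support_compl_null:
  fixes M :: "('a::{metric_space, second_countable_topology}) measure"
  assumes "sets M = sets borel"
  shows "- support M \<in> null_sets M"
proof -
  define F where "F = {ball x e | x e. e > 0 \<and> emeasure M (ball x e) = 0}"
  have "open X" if "X \<in> F" for X using that unfolding F_def by auto
  then obtain F' where F': "F' \<subseteq> F" "countable F'" "\<Union>F' = \<Union>F"
    using Lindelof by metis
  have "\<Union>F = - support M"
  proof (intro equalityI subsetI)
    fix y assume "y \<in> \<Union>F"
    then obtain x e where xe: "emeasure M (ball x e) = 0" "y \<in> ball x e"
      unfolding F_def by auto
    have "ball y (e - dist x y) \<subseteq> ball x e"
    proof
      fix z assume "z \<in> ball y (e - dist x y)"
      then show "z \<in> ball x e" using dist_triangle[of x z y] by simp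
    qed
    then have "emeasure M (ball y (e - dist x y)) \<le> emeasure M (ball x e)"
      by (rule emeasure_mono) (simp add: assms)
    then have "emeasure M (ball y (e - dist x y)) = 0"
      using xe(1) by simp
    moreover have "e - dist x y > 0" using xe(2) by simp
    ultimately have "\<not> (\<forall>\<epsilon>>0. 0 < emeasure M (ball y \<epsilon>))"
      by (metis less_irrefl)
    then show "y \<in> - support M" unfolding support_def by simp
  next
    fix y assume "y \<in> - support M"
    then obtain e where "e > 0" "emeasure M (ball y e) = 0"
      unfolding support_def by (auto simp: not_less)
    then show "y \<in> \<Union>F" unfolding F_def using centre_in_ball by blast
  qed
  moreover have "(\<Union>X\<in>F'. X) \<in> null_sets M"
  proof (rule null_sets_UN'[OF F'(2)])
    fix X assume "X \<in> F'"
    then obtain x e where "X = ball x e" "emeasure M (ball x e) = 0"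
      using F'(1) unfolding F_def by blast
    then show "X \<in> null_sets M" by (simp add: assms null_sets_def)
  qed
  ultimately show ?thesis using F'(3) by simp
qed

lemma AE_in_support_distr:
  fixes g :: "'a \<Rightarrow> 'b::{metric_space, second_countable_topology}"
  assumes "g \<in> borel_measurable M"
  shows "AE x in M. g x \<in> support (distr M borel g)"
proof -
  have null: "- support (distr M borel g) \<in> null_sets (distr M borel g)"
    by (rule support_compl_null) simp
  then have "support (distr M borel g) \<in> sets borel"
    using borel_comp[of "- support (distr M borel g)"] by (simp add: null_sets_def)
  moreover have "AE y in distr M borel g. y \<in> support (distr M borel g)"
    using AE_not_in[OF null] by simp
  ultimately show ?thesis
    using AE_distr_iff[OF assms, of "\<lambda>y. y \<in> support (distr M borel g)"] by simp
qed

lemma support_subset_closed: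
  fixes M :: "('a::metric_space) measure"
  assumes "sets M = sets borel" "closed S" "AE x in M. x \<in> S"
  shows "support M \<subseteq> S"
proof
  fix z assume z: "z \<in> support M"
  show "z \<in> S"
  proof (rule ccontr)
    assume "z \<notin> S"
    then obtain e where e: "e > 0" "ball z e \<subseteq> - S"
      using assms(2) open_contains_ball by (metis Compl_iff open_Compl)
    obtain N where N: "{x \<in> space M. x \<notin> S} \<subseteq> N" "emeasure M N = 0" "N \<in> sets M"
      using assms(3) by (rule AE_E)
    have "ball z e \<subseteq> N"
      using e(2) N(1) sets_eq_imp_space_eq[OF assms(1)] by auto
    then have "emeasure M (ball z e) = 0"
      using emeasure_mono[of "ball z e" N M] N(2,3) by simp
    then show False using z e(1) unfolding support_def by auto
  qed
qed

lemma covering_number_attained: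
  fixes A :: "'a::metric_space set"
  assumes "compact S" "A \<subseteq> S" "0 < r"
  obtains C where "finite C" "A \<subseteq> (\<Union>c\<in>C. ball c r)" "card C = covering_number r A"
proof -
  define Cards where "Cards = {card C | C. finite C \<and> A \<subseteq> (\<Union>c\<in>C. ball c r)}"
  obtain k where k: "finite k" "S \<subseteq> (\<Union>x\<in>k. ball x r)"
    using assms(1,3) compact_eq_totally_bounded by metis
  have "A \<subseteq> (\<Union>x\<in>k. ball x r)" using assms(2) k(2) by (rule order_trans)
  then have "card k \<in> Cards" unfolding Cards_def using k(1) by blast
  then have "Inf Cards \<in> Cards" by (intro Inf_nat_def1) blast
  then obtain C where C: "finite C" "A \<subseteq> (\<Union>c\<in>C. ball c r)" "card C = Inf Cards"
    unfolding Cards_def by auto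
  have "covering_number r A = Inf Cards"
    unfolding covering_number_def Cards_def by (rule refl)
  with C show ?thesis by (intro that) simp_all
qed

lemma card_far_pairs_ge:
  fixes w :: "'a \<Rightarrow> real" and far :: "'a \<Rightarrow> 'a \<Rightarrow> bool"
  assumes I: "finite I" and total: "sum w I = 1"
    and w: "\<And>i. i \<in> I \<Longrightarrow> 0 \<le> w i" "\<And>i. i \<in> I \<Longrightarrow> w i \<le> m"
    and near: "\<And>i. i \<in> I \<Longrightarrow> sum w {j \<in> I. \<not> far i j} \<le> 1/2"
  shows "1/2 \<le> real (card {(i, j) \<in> I \<times> I. far i j \<and> w i \<noteq> 0 \<and> w j \<noteq> 0}) * m\<^sup>2"
proof -
  define P where "P = {(i, j) \<in> I \<times> I. far i j \<and> w i \<noteq> 0 \<and> w j \<noteq> 0}"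
  have split: "w i * w j = (if far i j then w i * w j else 0) + (if far i j then 0 else w i * w j)"
    for i j by simp
  have row: "(\<Sum>j\<in>I. if far i j then 0 else w i * w j) = w i * sum w {j \<in> I. \<not> far i j}" for i
    unfolding sum.inter_filter[OF I] sum_distrib_left by (rule sum.cong) auto
  have wm: "w i * w j \<le> m\<^sup>2" if "i \<in> I" "j \<in> I" for i j
  proof -
    have "0 \<le> m" using w that by (meson order_trans)
    then show ?thesis
      using mult_mono[OF w(2)[OF that(1)] w(2)[OF that(2)] _ w(1)[OF that(2)]]
      by (simp add: power2_eq_square)
  qed
  have "1 = sum w I * sum w I" using total by simp
  also have "\<dots> = (\<Sum>i\<in>I. \<Sum>j\<in>I. w i * w j)" by (rule sum_product)
  also have "\<dots> = (\<Sum>i\<in>I. \<Sum>j\<in>I. if far i j then w i * w j else 0)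
      + (\<Sum>i\<in>I. \<Sum>j\<in>I. if far i j then 0 else w i * w j)"
    by (subst split) (simp add: sum.distrib)
  also have "(\<Sum>i\<in>I. \<Sum>j\<in>I. if far i j then w i * w j else 0) = (\<Sum>(i, j)\<in>P. w i * w j)"
    unfolding sum.cartesian_product P_def
    by (rule sum.mono_neutral_cong_right) (use I in \<open>auto split: if_splits\<close>)
  also have "\<dots> \<le> (\<Sum>(i, j)\<in>P. m\<^sup>2)"
    by (rule sum_mono) (auto simp: P_def intro: wm)
  also have "(\<Sum>i\<in>I. \<Sum>j\<in>I. if far i j then 0 else w i * w j) \<le> (\<Sum>i\<in>I. w i * (1/2))"
    unfolding row by (rule sum_mono) (intro mult_left_mono near w(1))
  also have "(\<Sum>i\<in>I. w i * (1/2)) = 1/2"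
    using total by (simp add: sum_divide_distrib[symmetric])
  finally show ?thesis by (simp add: P_def)
qed

abbreviation line_graph :: "real \<times> real \<Rightarrow> real \<Rightarrow> real \<times> real" where
  "line_graph \<omega> x \<equiv> (x, line_map \<omega> x)"

definition graph_meets_ball :: "real \<times> real \<Rightarrow> real \<times> real \<Rightarrow> real \<Rightarrow> bool" where
  "graph_meets_ball \<omega> p \<rho> \<longleftrightarrow> (\<exists>x\<in>{-1<..<1}. dist (line_graph \<omega> x) p < \<rho>)"

lemma line_graph_measurable:
  assumes "sets M = sets borel"
  shows "line_graph \<omega> \<in> borel_measurable M"
  unfolding measurable_cong_sets[OF assms refl] line_map_def
  by (intro borel_measurable_continuous_onI continuous_intros)

lemma abs_coords_lt_of_mem_ball:
  fixes \<omega> :: "real \<times> real"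
  assumes "\<omega> \<in> ball 0 1"
  shows "\<bar>fst \<omega>\<bar> < 1" "\<bar>snd \<omega>\<bar> < 1"
proof -
  have "\<bar>fst \<omega>\<bar> \<le> norm \<omega>" "\<bar>snd \<omega>\<bar> \<le> norm \<omega>"
    by (metis fst_conv norm_fst_le prod.collapse real_norm_def)
       (metis snd_conv norm_snd_le prod.collapse real_norm_def)
  moreover have "norm \<omega> < 1" using assms by simp
  ultimately show "\<bar>fst \<omega>\<bar> < 1" "\<bar>snd \<omega>\<bar> < 1" by linarith+
qed

lemma dak_measure_AE_interval:
  assumes "dak_measure \<delta> \<alpha> K \<mu>"
  shows "AE x in \<mu>. x \<in> {-1<..<1}"
proof -
  interpret prob_space \<mu> using assms unfolding dak_measure_def by simp
  show ?thesis
    using assms prob_eq_1[of "{-1<..<1}"] unfolding dak_measure_def by simp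
qed

lemma support_line_measure_bounded:
  assumes dak: "dak_measure \<delta> \<alpha> K \<mu>" and \<omega>: "\<omega> \<in> ball 0 1"
  shows "support (distr \<mu> borel (line_graph \<omega>)) \<subseteq> cball 0 3"
proof (rule support_subset_closed)
  have s\<mu>: "sets \<mu> = sets borel" using dak unfolding dak_measure_def by simp
  have "AE x in \<mu>. line_graph \<omega> x \<in> cball 0 3"
    using dak_measure_AE_interval[OF dak]
  proof eventually_elim
    case (elim x)
    have "\<bar>fst \<omega> * x\<bar> \<le> \<bar>x\<bar>"
      using abs_coords_lt_of_mem_ball[OF \<omega>] by (simp add: abs_mult mult_left_le_one_le)
    then have "\<bar>line_map \<omega> x\<bar> < 2"
      using elim abs_coords_lt_of_mem_ball[OF \<omega>] unfolding line_map_def by auto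
    then have "norm (line_graph \<omega> x) < 3"
      using elim norm_Pair_le[of x "line_map \<omega> x"] by auto
    then show ?case by simp
  qed
  then show "AE y in distr \<mu> borel (line_graph \<omega>). y \<in> cball 0 3"
    by (subst AE_distr_iff) (auto intro: line_graph_measurable[OF s\<mu>])
qed simp_all

lemma measure_line_preimage_eq_1:
  assumes dak: "dak_measure \<delta> \<alpha> K \<mu>" and U: "U \<in> sets borel"
    and supp: "support (distr \<mu> borel (line_graph \<omega>)) \<subseteq> U"
  shows "measure \<mu> ({-1<..<1} \<inter> line_graph \<omega> -` U) = 1"
proof -
  interpret prob_space \<mu> using dak unfolding dak_measure_def by simp
  have s\<mu>: "sets \<mu> = sets borel" using dak unfolding dak_measure_def by simp
  note meas = line_graph_measurable[OF s\<mu>, of \<omega>]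
  have "AE x in \<mu>. line_graph \<omega> x \<in> U"
    using AE_in_support_distr[OF meas] by eventually_elim (use supp in blast)
  then have "AE x in \<mu>. x \<in> {-1<..<1} \<inter> line_graph \<omega> -` U"
    using dak_measure_AE_interval[OF dak] by eventually_elim simp
  moreover have "{-1<..<1} \<inter> line_graph \<omega> -` U \<in> sets \<mu>"
    using measurable_sets[OF meas U] sets_eq_imp_space_eq[OF s\<mu>] s\<mu> by auto
  ultimately show ?thesis using prob_eq_1 by simp
qed

definition far_index_pairs :: "(real \<times> real) list \<Rightarrow> real \<Rightarrow> (nat \<times> nat) set" where
  "far_index_pairs cs d =
     {(i, j). i < length cs \<and> j < length cs \<and> d \<le> \<bar>fst (cs ! i) - fst (cs ! j)\<bar>}"

lemma line_measure_ball_partition: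
  fixes cs :: "(real \<times> real) list"
  assumes dak: "dak_measure \<delta> \<alpha> K \<mu>"
    and cover: "support (distr \<mu> borel (line_graph \<omega>)) \<subseteq> (\<Union>p\<in>set cs. ball p \<rho>)"
  obtains T :: "nat \<Rightarrow> real set"
  where "\<And>k. T k \<in> sets \<mu>" "disjoint_family T" "\<And>k. T k \<subseteq> ball (fst (cs ! k)) \<rho>"
    "measure \<mu> (\<Union>k<length cs. T k) = 1" "\<And>k. T k \<noteq> {} \<Longrightarrow> graph_meets_ball \<omega> (cs ! k) \<rho>"
proof
  have s\<mu>: "sets \<mu> = sets borel" using dak unfolding dak_measure_def by simp
  define G where "G k = {-1<..<1} \<inter> line_graph \<omega> -` ball (cs ! k) \<rho>" for k
  have "G k \<in> sets \<mu>" for k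
    using measurable_sets[OF line_graph_measurable[OF s\<mu>], of "ball (cs ! k) \<rho>" \<omega>]
      sets_eq_imp_space_eq[OF s\<mu>] s\<mu> unfolding G_def by auto
  then have "range (disjointed G) \<subseteq> sets \<mu>"
    by (intro sets.range_disjointed_sets) auto
  then show "disjointed G k \<in> sets \<mu>" for k by auto
  show "disjoint_family (disjointed G)" by (rule disjoint_family_disjointed)
  have G: "x \<in> G k" if "x \<in> disjointed G k" for x k
    using that by (rule subsetD[OF disjointed_subset])
  show "disjointed G k \<subseteq> ball (fst (cs ! k)) \<rho>" for k
  proof
    fix x assume "x \<in> disjointed G k"
    then have "dist (line_graph \<omega> x) (cs ! k) < \<rho>"
      using G unfolding G_def by (simp add: dist_commute)
    then show "x \<in> ball (fst (cs ! k)) \<rho>"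
      using dist_fst_le[of "line_graph \<omega> x" "cs ! k"] by (simp add: dist_commute)
  qed
  show "graph_meets_ball \<omega> (cs ! k) \<rho>" if ne: "disjointed G k \<noteq> {}" for k
  proof -
    obtain x where "x \<in> disjointed G k" using ne by blast
    then have "x \<in> G k" by (rule G)
    then show ?thesis unfolding G_def graph_meets_ball_def by (auto simp: dist_commute)
  qed
  have "(\<Union>k<length cs. disjointed G k) = (\<Union>k<length cs. G k)"
    using finite_UN_disjointed_eq[of G "length cs"] by (simp add: atLeast0LessThan)
  also have "\<dots> = {-1<..<1} \<inter> line_graph \<omega> -` (\<Union>p\<in>set cs. ball p \<rho>)"
    unfolding G_def by (auto simp: set_conv_nth)
  moreover have "(\<Union>p\<in>set cs. ball p \<rho>) \<in> sets borel" by (intro borel_open) auto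
  ultimately show "measure \<mu> (\<Union>k<length cs. disjointed G k) = 1"
    using measure_line_preimage_eq_1[OF dak _ cover] by simp
qed

lemma measure_near_pieces_le:
  assumes dak: "dak_measure \<delta> \<alpha> K \<mu>" and c: "\<delta> \<le> c" "c \<le> 1" "K * c powr \<alpha> \<le> 1/2"
    and T: "\<And>j. j \<in> J \<Longrightarrow> T j \<subseteq> ball (u j) \<rho>" "\<And>j. j \<in> J \<Longrightarrow> \<bar>x\<^sub>0 - u j\<bar> < c / 2"
    and \<rho>: "2 * \<rho> \<le> c"
  shows "measure \<mu> (\<Union>j\<in>J. T j) \<le> 1/2"
proof -
  interpret prob_space \<mu> using dak unfolding dak_measure_def by simp
  have "(\<Union>j\<in>J. T j) \<subseteq> ball x\<^sub>0 c"
  proof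
    fix x assume "x \<in> (\<Union>j\<in>J. T j)"
    then obtain j where j: "j \<in> J" "x \<in> ball (u j) \<rho>" using T(1) by blast
    then have "\<bar>x\<^sub>0 - u j\<bar> < c / 2" "\<bar>u j - x\<bar> < \<rho>" using T(2) by (auto simp: dist_real_def)
    moreover have "x\<^sub>0 - x = (x\<^sub>0 - u j) + (u j - x)" by simp
    ultimately have "\<bar>x\<^sub>0 - x\<bar> < c"
      using abs_triangle_ineq[of "x\<^sub>0 - u j" "u j - x"] \<rho> by linarith
    then show "x \<in> ball x\<^sub>0 c" by (simp add: dist_real_def)
  qed
  then have "measure \<mu> (\<Union>j\<in>J. T j) \<le> measure \<mu> (ball x\<^sub>0 c)"
    using dak by (intro finite_measure_mono) (simp_all add: dak_measure_def)
  also have "\<dots> \<le> K * c powr \<alpha>" using dak c unfolding dak_measure_def by simp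
  finally show ?thesis using c(3) by simp
qed

lemma card_far_pairs_met_by_line:
  fixes cs :: "(real \<times> real) list"
  assumes dak: "dak_measure \<delta> \<alpha> K \<mu>" and \<rho>: "0 < \<rho>" "\<delta> \<le> \<rho>" "2 * \<rho> \<le> c" "c \<le> 1"
    and c: "K * c powr \<alpha> \<le> 1/2"
    and cover: "support (distr \<mu> borel (line_graph \<omega>)) \<subseteq> (\<Union>p\<in>set cs. ball p \<rho>)"
  shows "1/2 \<le> real (card {(i, j) \<in> far_index_pairs cs (c/2).
                  graph_meets_ball \<omega> (cs ! i) \<rho> \<and> graph_meets_ball \<omega> (cs ! j) \<rho>}) * (K * \<rho> powr \<alpha>)\<^sup>2"
proof -
  interpret prob_space \<mu> using dak unfolding dak_measure_def by simp
  have s\<mu>: "sets \<mu> = sets borel" using dak unfolding dak_measure_def by simp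
  obtain T where T: "\<And>k. T k \<in> sets \<mu>" "disjoint_family T" "\<And>k. T k \<subseteq> ball (fst (cs ! k)) \<rho>"
    "measure \<mu> (\<Union>k<length cs. T k) = 1" "\<And>k. T k \<noteq> {} \<Longrightarrow> graph_meets_ball \<omega> (cs ! k) \<rho>"
    using line_measure_ball_partition[OF dak cover] by blast
  define N where "N = length cs"
  define w where "w k = measure \<mu> (T k)" for k
  have sum_w: "sum w J = measure \<mu> (\<Union>k\<in>J. T k)" if "finite J" for J
    unfolding w_def using that T(1) disjoint_family_on_mono[OF subset_UNIV T(2)]
    by (intro finite_measure_finite_Union[symmetric]) auto
  have w_le: "w k \<le> K * \<rho> powr \<alpha>" for k
  proof -
    have "w k \<le> measure \<mu> (ball (fst (cs ! k)) \<rho>)"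
      unfolding w_def by (rule finite_measure_mono[OF T(3)]) (simp add: s\<mu>)
    also have "\<dots> \<le> K * \<rho> powr \<alpha>" using dak \<rho> unfolding dak_measure_def by simp
    finally show ?thesis .
  qed
  have near: "sum w {j \<in> {..<N}. \<not> c/2 \<le> \<bar>fst (cs ! i) - fst (cs ! j)\<bar>} \<le> 1/2" for i
  proof -
    let ?J = "{j \<in> {..<N}. \<not> c/2 \<le> \<bar>fst (cs ! i) - fst (cs ! j)\<bar>}"
    have "measure \<mu> (\<Union>j\<in>?J. T j) \<le> 1/2"
      by (rule measure_near_pieces_le[OF dak, where u = "\<lambda>j. fst (cs ! j)" and x\<^sub>0 = "fst (cs ! i)"])
        (use \<rho> c T(3) in auto)
    then show ?thesis using sum_w[of ?J] by simp
  qed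
  have "1/2 \<le> real (card {(i, j) \<in> {..<N} \<times> {..<N}.
      c/2 \<le> \<bar>fst (cs ! i) - fst (cs ! j)\<bar> \<and> w i \<noteq> 0 \<and> w j \<noteq> 0}) * (K * \<rho> powr \<alpha>)\<^sup>2"
    by (rule card_far_pairs_ge) (use sum_w[of "{..<N}"] T(4) w_le near in \<open>auto simp: w_def N_def\<close>)
  also have "\<dots> \<le> real (card {(i, j) \<in> far_index_pairs cs (c/2).
      graph_meets_ball \<omega> (cs ! i) \<rho> \<and> graph_meets_ball \<omega> (cs ! j) \<rho>}) * (K * \<rho> powr \<alpha>)\<^sup>2"
  proof (intro mult_right_mono of_nat_mono card_mono)
    have "graph_meets_ball \<omega> (cs ! k) \<rho>" if "w k \<noteq> 0" for k
    proof (rule T(5))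
      show "T k \<noteq> {}" using that unfolding w_def by auto
    qed
    then show "{(i, j) \<in> {..<N} \<times> {..<N}. c/2 \<le> \<bar>fst (cs ! i) - fst (cs ! j)\<bar> \<and> w i \<noteq> 0 \<and> w j \<noteq> 0}
        \<subseteq> {(i, j) \<in> far_index_pairs cs (c/2).
             graph_meets_ball \<omega> (cs ! i) \<rho> \<and> graph_meets_ball \<omega> (cs ! j) \<rho>}"
      unfolding far_index_pairs_def N_def by auto
    show "finite {(i, j) \<in> far_index_pairs cs (c/2).
             graph_meets_ball \<omega> (cs ! i) \<rho> \<and> graph_meets_ball \<omega> (cs ! j) \<rho>}"
      by (rule finite_subset[of _ "{..<length cs} \<times> {..<length cs}"]) (auto simp: far_index_pairs_def)
  qed simp
  finally show ?thesis .
qed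

lemma dist_le_abs_fst_plus_abs_snd:
  "dist (p :: real \<times> real) q \<le> \<bar>fst p - fst q\<bar> + \<bar>snd p - snd q\<bar>"
proof -
  have "dist p q = sqrt ((dist (fst p) (fst q))\<^sup>2 + (dist (snd p) (snd q))\<^sup>2)"
    by (metis dist_Pair_Pair prod.collapse)
  also have "\<dots> \<le> \<bar>dist (fst p) (fst q)\<bar> + \<bar>dist (snd p) (snd q)\<bar>"
    by (rule sqrt_sum_squares_le_sum_abs)
  finally show ?thesis by (simp add: dist_real_def)
qed

lemma abs_diff_lt_of_floor_eq:
  fixes a b \<rho> :: real
  assumes "\<lfloor>2 * a / \<rho>\<rfloor> = \<lfloor>2 * b / \<rho>\<rfloor>" "0 < \<rho>"
  shows "\<bar>a - b\<bar> < \<rho> / 2"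
proof -
  have "\<bar>2 * a / \<rho> - 2 * b / \<rho>\<bar> < 1"
    using assms(1) floor_correct[of "2 * a / \<rho>"] floor_correct[of "2 * b / \<rho>"]
    unfolding abs_less_iff by linarith
  moreover have "2 * a / \<rho> - 2 * b / \<rho> = 2 * (a - b) / \<rho>"
    by (simp add: diff_divide_distrib right_diff_distrib)
  moreover have "\<bar>2 * (a - b) / \<rho>\<bar> = 2 * \<bar>a - b\<bar> / \<rho>"
    unfolding abs_divide abs_mult using assms(2) by simp
  ultimately show ?thesis using assms(2) by (simp add: field_simps)
qed

lemma card_separated_in_square:
  fixes S :: "(real \<times> real) set" and q :: "real \<times> real"
  assumes \<rho>: "0 < \<rho>" and sep: "separated \<rho> S"
    and box: "\<And>p. p \<in> S \<Longrightarrow> \<bar>fst p - fst q\<bar> \<le> R \<and> \<bar>snd p - snd q\<bar> \<le> R"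
  shows "finite S" "real (card S) \<le> (2 * of_int \<lceil>2 * R / \<rho>\<rceil> + 1)\<^sup>2"
proof -
  define m where "m = \<lceil>2 * R / \<rho>\<rceil>"
  define cell where "cell p = (\<lfloor>2 * (fst p - fst q) / \<rho>\<rfloor>, \<lfloor>2 * (snd p - snd q) / \<rho>\<rfloor>)" for p
  have floor_in: "- m \<le> \<lfloor>t\<rfloor> \<and> \<lfloor>t\<rfloor> \<le> m" if "\<bar>t\<bar> \<le> of_int m" for t :: real
    using that by (simp add: abs_le_iff le_floor_iff floor_le_iff)
  have floor_bound: "- m \<le> \<lfloor>2 * u / \<rho>\<rfloor> \<and> \<lfloor>2 * u / \<rho>\<rfloor> \<le> m" if "\<bar>u\<bar> \<le> R" for u
  proof (rule floor_in)
    have "\<bar>2 * u / \<rho>\<bar> \<le> 2 * R / \<rho>"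
      using that \<rho> by (simp add: abs_mult abs_divide divide_right_mono)
    then show "\<bar>2 * u / \<rho>\<bar> \<le> of_int m"
      unfolding m_def using le_of_int_ceiling order_trans by blast
  qed
  have grid: "cell ` S \<subseteq> {-m..m} \<times> {-m..m}"
    using box floor_bound unfolding cell_def by fastforce
  have inj: "inj_on cell S"
  proof (rule inj_onI)
    fix p p' assume p: "p \<in> S" "p' \<in> S" "cell p = cell p'"
    then have "\<lfloor>2 * (fst p - fst q) / \<rho>\<rfloor> = \<lfloor>2 * (fst p' - fst q) / \<rho>\<rfloor>"
      "\<lfloor>2 * (snd p - snd q) / \<rho>\<rfloor> = \<lfloor>2 * (snd p' - snd q) / \<rho>\<rfloor>"
      by (simp_all only: cell_def prod.inject)
    then have "\<bar>(fst p - fst q) - (fst p' - fst q)\<bar> < \<rho> / 2"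
      "\<bar>(snd p - snd q) - (snd p' - snd q)\<bar> < \<rho> / 2"
      using abs_diff_lt_of_floor_eq[OF _ \<rho>] by blast+
    then have "dist p p' < \<rho>"
      using dist_le_abs_fst_plus_abs_snd[of p p'] by simp
    then show "p = p'" using sep p(1,2) unfolding separated_def by force
  qed
  show fin: "finite S"
    using finite_imageD[OF finite_subset[OF grid] inj] by simp
  show "real (card S) \<le> (2 * of_int \<lceil>2 * R / \<rho>\<rceil> + 1)\<^sup>2"
  proof (cases "S = {}")
    case False
    then have "0 \<le> R" using box by fastforce
    then have "0 \<le> 2 * R / \<rho>" using \<rho> by simp
    then have "0 \<le> m" unfolding m_def by (simp add: zero_le_ceiling)
    have "card S = card (cell ` S)" using card_image[OF inj] by simp
    also have "\<dots> \<le> card ({-m..m} \<times> {-m..m})" by (rule card_mono[OF _ grid]) simp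
    also have "\<dots> = nat (2 * m + 1) * nat (2 * m + 1)" by (simp add: card_cartesian_product)
    finally have "real (card S) \<le> real (nat (2 * m + 1) * nat (2 * m + 1))"
      by (simp only: of_nat_le_iff)
    then show ?thesis using \<open>0 \<le> m\<close> by (simp add: m_def power2_eq_square)
  qed simp
qed

lemma line_map_near_of_graph_meets_ball:
  assumes "\<bar>fst \<omega>\<bar> \<le> 1" "graph_meets_ball \<omega> p \<rho>"
  shows "\<bar>line_map \<omega> (fst p) - snd p\<bar> < 2 * \<rho>" "\<bar>fst p\<bar> < 1 + \<rho>"
proof -
  obtain x where x: "x \<in> {-1<..<1}" "dist (line_graph \<omega> x) p < \<rho>"
    using assms(2) unfolding graph_meets_ball_def by blast
  have dx: "\<bar>x - fst p\<bar> < \<rho>"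
    using dist_fst_le[of "line_graph \<omega> x" p] x(2) by (simp add: dist_real_def)
  have dy: "\<bar>line_map \<omega> x - snd p\<bar> < \<rho>"
    using dist_snd_le[of "line_graph \<omega> x" p] x(2) by (simp add: dist_real_def)
  have "\<bar>fst \<omega> * (fst p - x)\<bar> \<le> \<bar>fst p - x\<bar>"
    using assms(1) by (simp add: abs_mult mult_left_le_one_le)
  moreover have "line_map \<omega> (fst p) - snd p = (line_map \<omega> x - snd p) + fst \<omega> * (fst p - x)"
    by (simp add: line_map_def algebra_simps)
  ultimately show "\<bar>line_map \<omega> (fst p) - snd p\<bar> < 2 * \<rho>"
    using dx dy abs_triangle_ineq[of "line_map \<omega> x - snd p" "fst \<omega> * (fst p - x)"]
    by (simp add: abs_minus_commute)
  show "\<bar>fst p\<bar> < 1 + \<rho>" using dx x(1) by auto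
qed

lemma line_coeffs_close:
  fixes \<omega> \<omega>' :: "real \<times> real"
  assumes x: "\<bar>line_map \<omega> x - line_map \<omega>' x\<bar> < e" and y: "\<bar>line_map \<omega> y - line_map \<omega>' y\<bar> < e"
    and d: "0 < d" "d \<le> \<bar>x - y\<bar>"
  shows "\<bar>fst \<omega> - fst \<omega>'\<bar> < 2 * e / d" "\<bar>snd \<omega> - snd \<omega>'\<bar> < e + \<bar>x\<bar> * (2 * e / d)"
proof -
  define da db where "da = fst \<omega> - fst \<omega>'" and "db = snd \<omega> - snd \<omega>'"
  have diff: "line_map \<omega> t - line_map \<omega>' t = da * t + db" for t
    unfolding line_map_def da_def db_def by (simp add: algebra_simps)
  have "da * (x - y) = (da * x + db) - (da * y + db)" by (simp add: algebra_simps)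
  then have "\<bar>da\<bar> * \<bar>x - y\<bar> < 2 * e"
    using x y unfolding diff abs_mult[symmetric] by linarith
  moreover have "\<bar>da\<bar> * d \<le> \<bar>da\<bar> * \<bar>x - y\<bar>" using d by (simp add: mult_left_mono)
  ultimately have "\<bar>da\<bar> * d < 2 * e" by linarith
  then show da: "\<bar>fst \<omega> - fst \<omega>'\<bar> < 2 * e / d" using d unfolding da_def by (simp add: field_simps)
  have "\<bar>da\<bar> * \<bar>x\<bar> \<le> (2 * e / d) * \<bar>x\<bar>"
    by (rule mult_right_mono) (use da in \<open>simp_all add: da_def\<close>)
  then have "\<bar>da * x\<bar> \<le> \<bar>x\<bar> * (2 * e / d)" by (metis abs_mult mult.commute)
  moreover have "db = (da * x + db) - da * x" by simp
  ultimately show "\<bar>snd \<omega> - snd \<omega>'\<bar> < e + \<bar>x\<bar> * (2 * e / d)"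
    using x unfolding diff db_def[symmetric] by linarith
qed

lemma card_lines_meeting_two_balls:
  fixes L :: "(real \<times> real) set" and p q :: "real \<times> real"
  assumes L: "L \<subseteq> ball 0 1" "separated \<rho> L" and \<rho>: "0 < \<rho>" "\<rho> \<le> 1"
    and c: "0 < c" "c \<le> 1" and far: "c / 2 \<le> \<bar>fst p - fst q\<bar>"
  shows "real (card {\<omega> \<in> L. graph_meets_ball \<omega> p \<rho> \<and> graph_meets_ball \<omega> q \<rho>})
           \<le> (2 * of_int \<lceil>72 / c\<rceil> + 1)\<^sup>2"
proof (cases "{\<omega> \<in> L. graph_meets_ball \<omega> p \<rho> \<and> graph_meets_ball \<omega> q \<rho>} = {}")
  case False
  define S where "S = {\<omega> \<in> L. graph_meets_ball \<omega> p \<rho> \<and> graph_meets_ball \<omega> q \<rho>}"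
  have near: "\<bar>line_map \<omega> (fst p) - snd p\<bar> < 2 * \<rho>" "\<bar>line_map \<omega> (fst q) - snd q\<bar> < 2 * \<rho>"
    "\<bar>fst p\<bar> < 1 + \<rho>" if "\<omega> \<in> S" for \<omega>
  proof -
    have "\<bar>fst \<omega>\<bar> \<le> 1" using that L(1) abs_coords_lt_of_mem_ball(1) unfolding S_def by fastforce
    then show "\<bar>line_map \<omega> (fst p) - snd p\<bar> < 2 * \<rho>" "\<bar>line_map \<omega> (fst q) - snd q\<bar> < 2 * \<rho>"
      "\<bar>fst p\<bar> < 1 + \<rho>"
      using that line_map_near_of_graph_meets_ball unfolding S_def by blast+
  qed
  obtain \<omega>\<^sub>0 where \<omega>\<^sub>0: "\<omega>\<^sub>0 \<in> S" using False unfolding S_def by blast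
  define k where "k = \<rho> / c"
  have box: "\<bar>fst \<omega> - fst \<omega>\<^sub>0\<bar> \<le> 36 * k \<and> \<bar>snd \<omega> - snd \<omega>\<^sub>0\<bar> \<le> 36 * k"
    if "\<omega> \<in> S" for \<omega>
  proof -
    have "\<bar>line_map \<omega> t - line_map \<omega>\<^sub>0 t\<bar> < 4 * \<rho>" if "t = fst p \<or> t = fst q" for t
      using that near[OF \<open>\<omega> \<in> S\<close>] near[OF \<omega>\<^sub>0] by auto
    moreover have "2 * (4 * \<rho>) / (c / 2) = 16 * k" unfolding k_def by simp
    ultimately have "\<bar>fst \<omega> - fst \<omega>\<^sub>0\<bar> < 16 * k" "\<bar>snd \<omega> - snd \<omega>\<^sub>0\<bar> < 4 * \<rho> + \<bar>fst p\<bar> * (16 * k)"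
      using line_coeffs_close[of \<omega> "fst p" \<omega>\<^sub>0 "4 * \<rho>" "fst q" "c / 2"] far c by auto
    moreover have "\<bar>fst p\<bar> * (16 * k) \<le> 2 * (16 * k)"
      using near(3)[OF \<omega>\<^sub>0] \<rho> c unfolding k_def by (intro mult_right_mono) auto
    moreover have "\<rho> \<le> k" "0 \<le> k" using \<rho> c unfolding k_def by (simp_all add: field_simps)
    ultimately show ?thesis by (intro conjI) linarith+
  qed
  have "separated \<rho> S" using L(2) unfolding separated_def S_def by auto
  then have "real (card S) \<le> (2 * of_int \<lceil>2 * (36 * k) / \<rho>\<rceil> + 1)\<^sup>2"
    using card_separated_in_square(2)[OF \<rho>(1) _ box] by blast
  also have "2 * (36 * k) / \<rho> = 72 / c" using \<rho> unfolding k_def by simp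
  finally show ?thesis unfolding S_def .
next
  case True
  show ?thesis unfolding True by simp
qed

lemma sum_card_incidences_le:
  fixes L :: "'a set" and P :: "'b set" and R :: "'a \<Rightarrow> 'b \<Rightarrow> bool"
  assumes "finite L" "finite P" "\<And>p. p \<in> P \<Longrightarrow> real (card {l \<in> L. R l p}) \<le> M"
  shows "(\<Sum>l\<in>L. real (card {p \<in> P. R l p})) \<le> real (card P) * M"
proof -
  have card_filter: "real (card {x \<in> A. Q x}) = (\<Sum>x\<in>A. if Q x then 1 else 0)" if "finite A"
    for A :: "'c set" and Q
    using sum.inter_filter[OF that, of "\<lambda>_. 1 :: real" Q] by simp
  have "(\<Sum>l\<in>L. real (card {p \<in> P. R l p})) = (\<Sum>l\<in>L. \<Sum>p\<in>P. if R l p then 1 else 0)"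
    using card_filter[OF assms(2)] by simp
  also have "\<dots> = (\<Sum>p\<in>P. \<Sum>l\<in>L. if R l p then 1 else 0)" by (rule sum.swap)
  also have "\<dots> = (\<Sum>p\<in>P. real (card {l \<in> L. R l p}))"
    using card_filter[OF assms(1)] by simp
  also have "\<dots> \<le> (\<Sum>p\<in>P. M)" by (rule sum_mono) (rule assms(3))
  finally show ?thesis by simp
qed

lemma finite_separated_in_unit_ball:
  fixes S :: "(real \<times> real) set"
  assumes "0 < \<rho>" "separated \<rho> S" "S \<subseteq> ball 0 1"
  shows "finite S" "real (card S) \<le> (2 * of_int \<lceil>2 / \<rho>\<rceil> + 1)\<^sup>2"
proof -
  have "\<bar>fst p - fst (0 :: real \<times> real)\<bar> \<le> 1 \<and> \<bar>snd p - snd (0 :: real \<times> real)\<bar> \<le> 1" if "p \<in> S" for p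
    using abs_coords_lt_of_mem_ball[of p] that assms(3) by fastforce
  from card_separated_in_square[OF assms(1,2) this]
  show "finite S" "real (card S) \<le> (2 * of_int \<lceil>2 / \<rho>\<rceil> + 1)\<^sup>2" by simp_all
qed

lemma furstenberg_tuple_line_measures:
  assumes "furstenberg_tuple \<delta> \<alpha> K \<Omega> \<nu>"
  obtains \<mu> where "\<And>\<omega>. \<omega> \<in> \<Omega> \<Longrightarrow> dak_measure \<delta> \<alpha> K (\<mu> \<omega>)"
    "\<And>\<omega>. \<omega> \<in> \<Omega> \<Longrightarrow> \<nu> \<omega> = distr (\<mu> \<omega>) borel (line_graph \<omega>)"
proof -
  have "\<forall>\<omega>\<in>\<Omega>. \<exists>\<mu>. dak_measure \<delta> \<alpha> K \<mu> \<and> \<nu> \<omega> = distr \<mu> borel (line_graph \<omega>)"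
    using assms unfolding furstenberg_tuple_def by simp
  then obtain \<mu> where "\<forall>\<omega>\<in>\<Omega>. dak_measure \<delta> \<alpha> K (\<mu> \<omega>) \<and> \<nu> \<omega> = distr (\<mu> \<omega>) borel (line_graph \<omega>)"
    by (rule bchoice[THEN exE])
  then show ?thesis using that by blast
qed

lemma supports_covered_by_centre_list:
  assumes F: "furstenberg_tuple \<delta> \<alpha> K \<Omega> \<nu>" and \<rho>: "0 < \<rho>"
  obtains cs where "(\<Union>\<omega>\<in>\<Omega>. support (\<nu> \<omega>)) \<subseteq> (\<Union>p\<in>set cs. ball p \<rho>)"
    "length cs = covering_number \<rho> (\<Union>\<omega>\<in>\<Omega>. support (\<nu> \<omega>))"
proof -
  define E where "E = (\<Union>\<omega>\<in>\<Omega>. support (\<nu> \<omega>))"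
  obtain \<mu> where \<mu>: "\<And>\<omega>. \<omega> \<in> \<Omega> \<Longrightarrow> dak_measure \<delta> \<alpha> K (\<mu> \<omega>)"
    "\<And>\<omega>. \<omega> \<in> \<Omega> \<Longrightarrow> \<nu> \<omega> = distr (\<mu> \<omega>) borel (line_graph \<omega>)"
    using furstenberg_tuple_line_measures[OF F] by blast
  have "support (\<nu> \<omega>) \<subseteq> cball 0 3" if "\<omega> \<in> \<Omega>" for \<omega>
  proof -
    have "\<omega> \<in> ball 0 1" using that F unfolding furstenberg_tuple_def by blast
    then show ?thesis using support_line_measure_bounded[OF \<mu>(1)[OF that]] \<mu>(2)[OF that] by simp
  qed
  then have "E \<subseteq> cball 0 3" unfolding E_def by blast
  then obtain C where C: "finite C" "E \<subseteq> (\<Union>p\<in>C. ball p \<rho>)" "card C = covering_number \<rho> E"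
    using covering_number_attained[of "cball 0 3" E \<rho>] \<rho> by auto
  obtain cs where cs: "set cs = C" "distinct cs" using finite_distinct_list[OF C(1)] by blast
  have "length cs = covering_number \<rho> E" using distinct_card[OF cs(2)] cs(1) C(3) by simp
  with C(2) cs(1) show ?thesis using that unfolding E_def by blast
qed

lemma card_separated_lines_le:
  fixes \<Omega> L :: "(real \<times> real) set" and \<nu> :: "real \<times> real \<Rightarrow> (real \<times> real) measure"
  assumes F: "furstenberg_tuple \<delta> \<alpha> K \<Omega> \<nu>" and L: "L \<subseteq> \<Omega>" "separated \<rho> L"
    and \<rho>: "0 < \<rho>" "\<delta> \<le> \<rho>" "2 * \<rho> \<le> c" and c: "c \<le> 1" "K * c powr \<alpha> \<le> 1/2"
  shows "real (card L) \<le> 2 * (2 * of_int \<lceil>72 / c\<rceil> + 1)\<^sup>2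
            * ((K * \<rho> powr \<alpha>)\<^sup>2 * (real (covering_number \<rho> (\<Union>\<omega>\<in>\<Omega>. support (\<nu> \<omega>))))\<^sup>2)"
proof -
  define M where "M = (2 * of_int \<lceil>72 / c\<rceil> + 1 :: real)\<^sup>2"
  define m where "m = (K * \<rho> powr \<alpha>)\<^sup>2"
  have \<Omega>: "\<Omega> \<subseteq> ball 0 1" using F unfolding furstenberg_tuple_def by simp
  obtain \<mu> where \<mu>: "\<And>\<omega>. \<omega> \<in> \<Omega> \<Longrightarrow> dak_measure \<delta> \<alpha> K (\<mu> \<omega>)"
    "\<And>\<omega>. \<omega> \<in> \<Omega> \<Longrightarrow> \<nu> \<omega> = distr (\<mu> \<omega>) borel (line_graph \<omega>)"
    using furstenberg_tuple_line_measures[OF F] by blast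
  obtain cs where cs: "(\<Union>\<omega>\<in>\<Omega>. support (\<nu> \<omega>)) \<subseteq> (\<Union>p\<in>set cs. ball p \<rho>)"
    "length cs = covering_number \<rho> (\<Union>\<omega>\<in>\<Omega>. support (\<nu> \<omega>))"
    using supports_covered_by_centre_list[OF F \<rho>(1)] by blast
  define P where "P = far_index_pairs cs (c / 2)"
  define R where "R \<omega> = (\<lambda>(i, j). graph_meets_ball \<omega> (cs ! i) \<rho> \<and> graph_meets_ball \<omega> (cs ! j) \<rho>)" for \<omega>
  have P_sub: "P \<subseteq> {..<length cs} \<times> {..<length cs}" unfolding P_def far_index_pairs_def by auto
  then have finP: "finite P" by (rule finite_subset) simp
  have "card P \<le> length cs * length cs"
    using card_mono[OF _ P_sub] by (simp add: card_cartesian_product)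
  then have card_P: "real (card P) \<le> (real (length cs))\<^sup>2"
    by (simp add: power2_eq_square flip: of_nat_mult)
  have finL: "finite L" using finite_separated_in_unit_ball(1)[OF \<rho>(1) L(2)] L(1) \<Omega> by blast
  have per_line: "1/2 \<le> real (card {ij \<in> P. R \<omega> ij}) * m" if "\<omega> \<in> L" for \<omega>
  proof -
    have "\<omega> \<in> \<Omega>" using that L(1) by blast
    then have "support (\<nu> \<omega>) \<subseteq> (\<Union>p\<in>set cs. ball p \<rho>)" using cs(1) by blast
    then have "support (distr (\<mu> \<omega>) borel (line_graph \<omega>)) \<subseteq> (\<Union>p\<in>set cs. ball p \<rho>)"
      using \<mu>(2)[OF \<open>\<omega> \<in> \<Omega>\<close>] by simp
    moreover have "{ij \<in> P. R \<omega> ij} = {(i, j) \<in> far_index_pairs cs (c / 2).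
        graph_meets_ball \<omega> (cs ! i) \<rho> \<and> graph_meets_ball \<omega> (cs ! j) \<rho>}"
      unfolding P_def R_def by auto
    ultimately show ?thesis
      using card_far_pairs_met_by_line[OF \<mu>(1)[OF \<open>\<omega> \<in> \<Omega>\<close>] \<rho> c] unfolding m_def by simp
  qed
  have per_pair: "real (card {\<omega> \<in> L. R \<omega> ij}) \<le> M" if "ij \<in> P" for ij
  proof -
    obtain i j where ij: "ij = (i, j)" by (cases ij)
    then have far: "c / 2 \<le> \<bar>fst (cs ! i) - fst (cs ! j)\<bar>"
      using that unfolding P_def far_index_pairs_def by simp
    have "real (card {\<omega> \<in> L. graph_meets_ball \<omega> (cs ! i) \<rho> \<and> graph_meets_ball \<omega> (cs ! j) \<rho>}) \<le> M"
      unfolding M_def using L(1) \<Omega> L(2) \<rho> c far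
      by (intro card_lines_meeting_two_balls) auto
    then show ?thesis unfolding R_def ij(1) by simp
  qed
  have "real (card L) / 2 \<le> (\<Sum>\<omega>\<in>L. real (card {ij \<in> P. R \<omega> ij}) * m)"
    using sum_mono[OF per_line] by simp
  also have "\<dots> = (\<Sum>\<omega>\<in>L. real (card {ij \<in> P. R \<omega> ij})) * m"
    by (simp add: sum_distrib_right)
  also have "\<dots> \<le> real (card P) * M * m"
    using sum_card_incidences_le[OF finL finP per_pair] by (simp add: m_def mult_right_mono)
  also have "\<dots> \<le> (real (length cs))\<^sup>2 * M * m"
    using card_P by (simp add: M_def m_def mult_right_mono)
  finally show ?thesis unfolding cs(2) M_def m_def by (simp add: algebra_simps)
qed

lemma card_separated_in_unit_ball_le:
  fixes S :: "(real \<times> real) set"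
  assumes "0 < c" "c < 2 * \<rho>" "separated \<rho> S" "S \<subseteq> ball 0 1"
  shows "real (card S) \<le> (2 * of_int \<lceil>4 / c\<rceil> + 1)\<^sup>2"
proof -
  have \<rho>: "0 < \<rho>" using assms(1,2) by linarith
  have "2 / \<rho> \<le> 4 / c" using assms(1,2) \<rho> by (simp add: field_simps)
  then have "\<lceil>2 / \<rho>\<rceil> \<le> \<lceil>4 / c\<rceil>" by (rule ceiling_mono)
  moreover have "0 \<le> 2 / \<rho>" using \<rho> by simp
  then have "0 \<le> \<lceil>2 / \<rho>\<rceil>" unfolding zero_le_ceiling by linarith
  ultimately have "(2 * of_int \<lceil>2 / \<rho>\<rceil> + 1 :: real)\<^sup>2 \<le> (2 * of_int \<lceil>4 / c\<rceil> + 1)\<^sup>2"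
    by (intro power_mono) auto
  then show ?thesis using finite_separated_in_unit_ball(2)[OF \<rho> assms(3,4)] by linarith
qed

lemma mass_times_count_powr_le:
  fixes \<rho> K N :: real
  assumes "0 < \<rho>" "0 \<le> K" "0 \<le> N" "N \<le> \<rho> powr (- \<alpha> - \<beta> / 2 - \<eta>)"
  shows "(K * \<rho> powr \<alpha>)\<^sup>2 * N\<^sup>2 \<le> K\<^sup>2 * \<rho> powr (- \<beta> - 2 * \<eta>)"
proof -
  have "(K * \<rho> powr \<alpha>)\<^sup>2 * N\<^sup>2 = (K * \<rho> powr \<alpha> * N)\<^sup>2" by (simp add: power_mult_distrib)
  also have "\<dots> \<le> (K * \<rho> powr \<alpha> * \<rho> powr (- \<alpha> - \<beta> / 2 - \<eta>))\<^sup>2"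
    using assms by (intro power_mono mult_left_mono) auto
  also have "\<dots> = K\<^sup>2 * \<rho> powr (- \<beta> - 2 * \<eta>)"
    using assms(1) by (simp add: power_mult_distrib power2_eq_square mult_ac flip: powr_add)
  finally show ?thesis .
qed

lemma card_separated_lines_powr_le:
  fixes \<Omega> L :: "(real \<times> real) set" and \<nu> :: "real \<times> real \<Rightarrow> (real \<times> real) measure"
  assumes F: "furstenberg_tuple \<delta> \<alpha> K \<Omega> \<nu>" and L: "L \<subseteq> \<Omega>" "separated \<rho> L"
    and \<rho>: "0 < \<rho>" "\<rho> \<le> 1" "\<delta> \<le> \<rho>" and c: "0 < c" "c \<le> 1" "K * c powr \<alpha> \<le> 1/2" and K: "0 \<le> K"
    and cov: "real (covering_number \<rho> (\<Union>\<omega>\<in>\<Omega>. support (\<nu> \<omega>))) \<le> \<rho> powr (- \<alpha> - \<beta> / 2 - \<eta>)"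
    and e: "0 \<le> \<beta> + 2 * \<eta>"
  shows "real (card L) \<le> (2 * K\<^sup>2 * (2 * of_int \<lceil>72 / c\<rceil> + 1)\<^sup>2 + (2 * of_int \<lceil>4 / c\<rceil> + 1)\<^sup>2)
                          * \<rho> powr (- \<beta> - 2 * \<eta>)"
proof -
  define M\<^sub>1 where "M\<^sub>1 = (2 * of_int \<lceil>72 / c\<rceil> + 1 :: real)\<^sup>2"
  define M\<^sub>2 where "M\<^sub>2 = (2 * of_int \<lceil>4 / c\<rceil> + 1 :: real)\<^sup>2"
  have "1 \<le> \<rho> powr (- \<beta> - 2 * \<eta>)"
    using powr_mono'[of "- \<beta> - 2 * \<eta>" 0 \<rho>] \<rho> e by simp
  then have M\<^sub>2: "M\<^sub>2 \<le> M\<^sub>2 * \<rho> powr (- \<beta> - 2 * \<eta>)" "0 \<le> M\<^sub>2 * \<rho> powr (- \<beta> - 2 * \<eta>)"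
    unfolding M\<^sub>2_def by (simp_all add: mult_le_cancel_left1)
  have "real (card L) \<le> 2 * K\<^sup>2 * M\<^sub>1 * \<rho> powr (- \<beta> - 2 * \<eta>) + M\<^sub>2 * \<rho> powr (- \<beta> - 2 * \<eta>)"
  proof (cases "2 * \<rho> \<le> c")
    case True
    have "real (card L) \<le> 2 * M\<^sub>1
        * ((K * \<rho> powr \<alpha>)\<^sup>2 * (real (covering_number \<rho> (\<Union>\<omega>\<in>\<Omega>. support (\<nu> \<omega>))))\<^sup>2)"
      unfolding M\<^sub>1_def using card_separated_lines_le[OF F L \<rho>(1,3) True c(2,3)] .
    also have "\<dots> \<le> 2 * M\<^sub>1 * (K\<^sup>2 * \<rho> powr (- \<beta> - 2 * \<eta>))"
      using mass_times_count_powr_le[OF \<rho>(1) K _ cov] unfolding M\<^sub>1_def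
      by (intro mult_left_mono) simp_all
    finally show ?thesis using M\<^sub>2(2) by (simp add: mult_ac)
  next
    case False
    have "L \<subseteq> ball 0 1" using F L(1) unfolding furstenberg_tuple_def by auto
    then have "real (card L) \<le> M\<^sub>2"
      unfolding M\<^sub>2_def using False c(1) L(2) by (intro card_separated_in_unit_ball_le) auto
    also have "\<dots> \<le> M\<^sub>2 * \<rho> powr (- \<beta> - 2 * \<eta>)" by (rule M\<^sub>2(1))
    finally show ?thesis unfolding M\<^sub>1_def by (simp add: add_increasing)
  qed
  then show ?thesis unfolding M\<^sub>1_def M\<^sub>2_def by (simp add: algebra_simps)
qed

lemma maximal_separated_subset_covers:
  fixes S L :: "'a::metric_space set"
  assumes "maximal_separated_subset d L S" "0 < d"
  shows "S \<subseteq> (\<Union>l\<in>L. ball l d)"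
proof
  fix x assume x: "x \<in> S"
  show "x \<in> (\<Union>l\<in>L. ball l d)"
  proof (rule ccontr)
    assume far: "x \<notin> (\<Union>l\<in>L. ball l d)"
    then have "separated d (insert x L)"
      using assms(1) unfolding maximal_separated_subset_def separated_def
      by (auto simp: dist_commute not_less)
    then have "insert x L = L"
      using assms(1) x unfolding maximal_separated_subset_def by blast
    then have "x \<in> L" by (metis insertI1)
    then show False using far assms(2) by auto
  qed
qed

lemma card_heavy_ge:
  fixes f :: "'a \<Rightarrow> real"
  assumes "finite L" "S \<le> sum f L" "\<And>l. l \<in> L \<Longrightarrow> f l \<le> a" "0 \<le> t"
    "real (card L) * t \<le> S / 2"
  shows "S / 2 \<le> real (card {l \<in> L. t \<le> f l}) * a"
proof -
  let ?H = "{l \<in> L. t \<le> f l}"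
  have "sum f L = sum f (L - ?H) + sum f ?H" by (rule sum.subset_diff) (use assms(1) in auto)
  also have "sum f (L - ?H) \<le> real (card L) * t"
  proof -
    have "sum f (L - ?H) \<le> real (card (L - ?H)) * t"
      using sum_bounded_above[of "L - ?H" f t] by fastforce
    also have "\<dots> \<le> real (card L) * t"
      using assms(1,4) by (intro mult_right_mono) (auto intro: card_mono)
    finally show ?thesis .
  qed
  also have "sum f ?H \<le> real (card ?H) * a"
    using sum_bounded_above[of ?H f a] assms(3) by auto
  finally show ?thesis using assms(2,5) by linarith
qed

lemma exists_heavy_centres:
  fixes \<Omega> \<Lambda> :: "'a::metric_space set"
  assumes \<Lambda>: "maximal_separated_subset \<rho> \<Lambda> \<Omega>" and \<Omega>: "finite \<Omega>" "\<Omega> \<noteq> {}" and \<rho>: "0 < \<rho>"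
    and frostman: "\<And>x. real (card (\<Omega> \<inter> ball x \<rho>)) \<le> a * real (card \<Omega>)" and a: "0 < a"
    and t: "0 \<le> t" "real (card \<Lambda>) * t \<le> 1/2"
  shows "\<exists>\<Lambda>'\<subseteq>\<Lambda>. 1 / (2 * a) \<le> real (card \<Lambda>') \<and>
           (\<forall>l\<in>\<Lambda>'. t * real (card \<Omega>) \<le> real (card (\<Omega> \<inter> ball l \<rho>)))"
proof -
  let ?f = "\<lambda>l. real (card (\<Omega> \<inter> ball l \<rho>))"
  let ?H = "{l \<in> \<Lambda>. t * real (card \<Omega>) \<le> ?f l}"
  have fin\<Lambda>: "finite \<Lambda>" using \<Lambda> \<Omega>(1) finite_subset unfolding maximal_separated_subset_def by blast
  have pos: "0 < real (card \<Omega>)" using \<Omega> by (simp add: card_gt_0_iff)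
  have "\<Omega> = (\<Union>l\<in>\<Lambda>. \<Omega> \<inter> ball l \<rho>)" using maximal_separated_subset_covers[OF \<Lambda> \<rho>] by blast
  then have "card \<Omega> \<le> (\<Sum>l\<in>\<Lambda>. card (\<Omega> \<inter> ball l \<rho>))"
    using card_UN_le[OF fin\<Lambda>, of "\<lambda>l. \<Omega> \<inter> ball l \<rho>"] by simp
  then have "real (card \<Omega>) \<le> sum ?f \<Lambda>" by (simp flip: of_nat_sum)
  moreover have "real (card \<Lambda>) * (t * real (card \<Omega>)) \<le> real (card \<Omega>) / 2"
    using mult_right_mono[OF t(2), of "real (card \<Omega>)"] by (simp add: algebra_simps)
  ultimately have "real (card \<Omega>) / 2 \<le> real (card ?H) * (a * real (card \<Omega>))"
    using t(1) pos by (intro card_heavy_ge[OF fin\<Lambda> _ frostman]) simp_all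
  then have "1 / (2 * a) \<le> real (card ?H)"
    using pos a by (simp add: field_simps)
  then show ?thesis by (intro exI[of _ ?H]) auto
qed

lemma heavy_centres_at_scale:
  fixes \<Omega> \<Lambda> :: "(real \<times> real) set" and \<nu> :: "real \<times> real \<Rightarrow> (real \<times> real) measure"
  assumes F: "furstenberg_tuple \<delta> \<alpha> K \<Omega> \<nu>" and ne: "\<Omega> \<noteq> {}"
    and frostman: "\<And>x. real (card (\<Omega> \<inter> ball x \<rho>)) \<le> A * \<rho> powr \<beta> * real (card \<Omega>)"
    and cov: "real (covering_number \<rho> (\<Union>\<omega>\<in>\<Omega>. support (\<nu> \<omega>))) \<le> \<rho> powr (- \<alpha> - \<beta> / 2 - \<eta>)"
    and \<Lambda>: "maximal_separated_subset \<rho> \<Lambda> \<Omega>"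
    and \<rho>: "0 < \<delta>" "\<delta> \<le> \<rho>" "\<rho> \<le> 1" and \<beta>\<eta>: "0 \<le> \<beta> + 2 * \<eta>" and A: "0 < A" and K: "0 \<le> K"
    and c\<^sub>0: "0 < c\<^sub>0" "c\<^sub>0 \<le> 1" "K * c\<^sub>0 powr \<alpha> \<le> 1/2"
    and c: "0 \<le> c" "c \<le> 1 / (2 * A)"
      "c * (2 * K\<^sup>2 * (2 * of_int \<lceil>72 / c\<^sub>0\<rceil> + 1)\<^sup>2 + (2 * of_int \<lceil>4 / c\<^sub>0\<rceil> + 1)\<^sup>2) \<le> 1/2"
  shows "\<exists>\<Lambda>'\<subseteq>\<Lambda>. c * \<rho> powr (- \<beta>) \<le> real (card \<Lambda>') \<and>
           (\<forall>l\<in>\<Lambda>'. c * \<rho> powr (\<beta> + 2 * \<eta>) * real (card \<Omega>) \<le> real (card (\<Omega> \<inter> ball l \<rho>)))"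
proof -
  define B where "B = 2 * K\<^sup>2 * (2 * of_int \<lceil>72 / c\<^sub>0\<rceil> + 1)\<^sup>2 + (2 * of_int \<lceil>4 / c\<^sub>0\<rceil> + 1 :: real)\<^sup>2"
  have \<rho>_pos: "0 < \<rho>" using \<rho> by linarith
  have fin: "finite \<Omega>"
    using F \<rho>(1) finite_separated_in_unit_ball(1) unfolding furstenberg_tuple_def by blast
  have card_\<Lambda>: "real (card \<Lambda>) \<le> B * \<rho> powr (- \<beta> - 2 * \<eta>)"
    using \<Lambda> unfolding maximal_separated_subset_def B_def
    by (intro card_separated_lines_powr_le[OF F _ _ \<rho>_pos \<rho>(3,2) c\<^sub>0 K cov \<beta>\<eta>]) auto
  have "real (card \<Lambda>) * (c * \<rho> powr (\<beta> + 2 * \<eta>))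
      \<le> B * \<rho> powr (- \<beta> - 2 * \<eta>) * (c * \<rho> powr (\<beta> + 2 * \<eta>))"
    by (rule mult_right_mono[OF card_\<Lambda>]) (use c(1) in simp)
  also have "\<dots> = c * B * (\<rho> powr (- \<beta> - 2 * \<eta>) * \<rho> powr (\<beta> + 2 * \<eta>))"
    by (simp only: mult_ac)
  also have "\<rho> powr (- \<beta> - 2 * \<eta>) * \<rho> powr (\<beta> + 2 * \<eta>) = 1"
    using \<rho>_pos by (simp flip: powr_add)
  finally have half: "real (card \<Lambda>) * (c * \<rho> powr (\<beta> + 2 * \<eta>)) \<le> 1/2"
    using c(3) unfolding B_def by simp
  have "0 < A * \<rho> powr \<beta>" "0 \<le> c * \<rho> powr (\<beta> + 2 * \<eta>)" using A \<rho>_pos c(1) by simp_all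
  from exists_heavy_centres[OF \<Lambda> fin ne \<rho>_pos frostman this half]
  obtain \<Lambda>' where \<Lambda>': "\<Lambda>' \<subseteq> \<Lambda>" "1 / (2 * (A * \<rho> powr \<beta>)) \<le> real (card \<Lambda>')"
    "\<forall>l\<in>\<Lambda>'. c * \<rho> powr (\<beta> + 2 * \<eta>) * real (card \<Omega>) \<le> real (card (\<Omega> \<inter> ball l \<rho>))"
    by blast
  have "c * \<rho> powr (- \<beta>) \<le> 1 / (2 * A) * \<rho> powr (- \<beta>)"
    using c(2) by (intro mult_right_mono) auto
  also have "\<dots> = 1 / (2 * (A * \<rho> powr \<beta>))" by (simp add: powr_minus_divide)
  finally show ?thesis using \<Lambda>' by (intro exI[of _ \<Lambda>']) auto
qed

lemma exists_scale_with_small_ball_mass: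
  fixes \<alpha> K :: real
  assumes "0 < \<alpha>" "1 \<le> K"
  obtains c where "0 < c" "c \<le> 1" "K * c powr \<alpha> \<le> 1/2"
proof -
  define c where "c = (1 / (2 * K)) powr (1 / \<alpha>)"
  have "c powr \<alpha> = 1 / (2 * K)" using assms unfolding c_def by (simp add: powr_powr)
  moreover have "0 < c" "c \<le> 1" using assms unfolding c_def by (auto intro: powr_le1)
  ultimately show ?thesis using assms by (intro that[of c]) auto
qed

theorem lemma9:
  fixes \<alpha> \<beta> K A :: real
  assumes "\<alpha> > 0" "\<beta> > 0" "K \<ge> 1" "A \<ge> 1"
  shows "\<exists>c>0. \<forall>(\<eta>::real) (s::real) (\<delta>::real) (\<Omega>::(real \<times> real) set) \<nu> \<Lambda>.
     \<eta> > 0 \<longrightarrow> 0 < s \<longrightarrow> s < 1 \<longrightarrow> 0 < \<delta> \<longrightarrow> \<delta> < 1 \<longrightarrow>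
     furstenberg_tuple \<delta> \<alpha> K \<Omega> \<nu> \<longrightarrow> \<Omega> \<noteq> {} \<longrightarrow>
     (\<forall>x r. \<delta> \<le> r \<and> r \<le> 1 \<longrightarrow> real (card (\<Omega> \<inter> ball x r)) \<le> A * r powr \<beta> * real (card \<Omega>)) \<longrightarrow>
     real (covering_number (\<delta> powr s) (\<Union>\<omega>\<in>\<Omega>. support (\<nu> \<omega>)))
        \<le> (\<delta> powr s) powr (- \<alpha> - \<beta> / 2 - \<eta>) \<longrightarrow>
     maximal_separated_subset (\<delta> powr s) \<Lambda> \<Omega> \<longrightarrow>
     (\<exists>\<Lambda>'\<subseteq>\<Lambda>. real (card \<Lambda>') \<ge> c * (\<delta> powr s) powr (- \<beta>) \<and>
        (\<forall>l\<in>\<Lambda>'. real (card (\<Omega> \<inter> ball l (\<delta> powr s)))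
                    \<ge> c * (\<delta> powr s) powr (\<beta> + 2 * \<eta>) * real (card \<Omega>)))"
proof -
  obtain c\<^sub>0 where c\<^sub>0: "0 < c\<^sub>0" "c\<^sub>0 \<le> 1" "K * c\<^sub>0 powr \<alpha> \<le> 1/2"
    using exists_scale_with_small_ball_mass[OF assms(1,3)] .
  define B where "B = 2 * K\<^sup>2 * (2 * of_int \<lceil>72 / c\<^sub>0\<rceil> + 1)\<^sup>2 + (2 * of_int \<lceil>4 / c\<^sub>0\<rceil> + 1 :: real)\<^sup>2"
  have "0 < 4 / c\<^sub>0" using c\<^sub>0(1) by simp
  then have "0 \<le> \<lceil>4 / c\<^sub>0\<rceil>" unfolding zero_le_ceiling by linarith
  then have "1 \<le> B" unfolding B_def by (smt (verit) of_int_nonneg one_le_power zero_le_mult_iff zero_le_power2)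
  define c where "c = min (1 / (2 * A)) (1 / (2 * B))"
  have c: "0 < c" "c \<le> 1 / (2 * A)" "c * B \<le> 1/2"
    using assms(4) \<open>1 \<le> B\<close> unfolding c_def by (auto simp: min_def field_simps)
  show ?thesis
  proof (intro exI[of _ c] conjI allI impI)
    fix \<eta> s \<delta> :: real and \<Omega> :: "(real \<times> real) set" and \<nu> \<Lambda>
    assume \<eta>: "\<eta> > 0" and s: "0 < s" "s < 1" and \<delta>: "0 < \<delta>" "\<delta> < 1"
      and F: "furstenberg_tuple \<delta> \<alpha> K \<Omega> \<nu>" and ne: "\<Omega> \<noteq> {}"
      and frostman: "\<forall>x r. \<delta> \<le> r \<and> r \<le> 1 \<longrightarrow> real (card (\<Omega> \<inter> ball x r)) \<le> A * r powr \<beta> * real (card \<Omega>)"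
      and cov: "real (covering_number (\<delta> powr s) (\<Union>\<omega>\<in>\<Omega>. support (\<nu> \<omega>))) \<le> (\<delta> powr s) powr (- \<alpha> - \<beta> / 2 - \<eta>)"
      and \<Lambda>: "maximal_separated_subset (\<delta> powr s) \<Lambda> \<Omega>"
    have \<rho>: "\<delta> \<le> \<delta> powr s" "\<delta> powr s \<le> 1"
      using powr_mono'[of s 1 \<delta>] powr_le1[of s \<delta>] s \<delta> by auto
    show "\<exists>\<Lambda>'\<subseteq>\<Lambda>. c * (\<delta> powr s) powr (- \<beta>) \<le> real (card \<Lambda>') \<and>
        (\<forall>l\<in>\<Lambda>'. c * (\<delta> powr s) powr (\<beta> + 2 * \<eta>) * real (card \<Omega>) \<le> real (card (\<Omega> \<inter> ball l (\<delta> powr s))))"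
      using \<rho> frostman assms(2-4) \<eta> c c\<^sub>0 unfolding B_def
      by (intro heavy_centres_at_scale[OF F ne _ cov \<Lambda> \<delta>(1) \<rho>]) auto
  qed (rule c(1))
qed

end
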